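(* Let $N>1$ and let the parameter space $\Theta$ of the correlated Bernoulli random graph model be nondegenerate. Then there does not exist an unbiased estimator of the heterogeneity correlation $\varrho_H$, i.e. there is no statistic $S:\mathcal{X}\to\mathbb{R}$ with $\mathbb{E}_\theta(S)=\varrho_H(\theta)$ for all $\theta\in\Theta$.
   Context: Correlated Bernoulli random graph model: fix a positive integer $N$ and let $\mathcal{R}=\{(p_1,\dots,p_N,\varrho_1,\dots,\varrho_N): p_i,\varrho_i\in[0,1]\}$; a parameter space is any $\Theta\subseteq\mathcal{R}$. For $\theta\in\Theta$, the pairs $(X_i,Y_i)$, $i=1,\dots,N$, of $\{0,1\}$-valued random variables are independent, $X_i,Y_i$ are marginally Bernoulli$(p_i)$ with Pearson correlation $\varrho_i$ (so $\mathbb{P}(X_i=Y_i=1)=p_i^2+\varrho_ip_i(1-p_i)$, $\mathbb{P}(X_i=Y_i=0)=(1-p_i)^2+\varrho_ip_i(1-p_i)$, $\mathbb{P}(X_i=1,Y_i=0)=\mathbb{P}(X_i=0,Y_i=1)=(1-\varrho_i)p_i(1-p_i)$). Sample space $\mathcal{X}=\{(x,y):x,y\in\{0,1\}^N\}$. Let $\mathcal{R}^o=\{(p_1,\dots,p_N,0,\dots,0):p_i\in\mathbb{R}\}$; $\Theta$ is nondegenerate if $\Theta\cap\mathcal{R}^o$ has an interior point relative to $\mathcal{R}^o$. Let $\mu=\frac1N\sum_i p_i$ and $\sigma^2=\frac1N\sum_i(p_i-\mu)^2$. The heterogeneity correlation is $\varrho_H=\frac{\sigma^2}{\mu(1-\mu)}$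 when $0<\mu<1$; when $\mu\in\{0,1\}$ it is defined by an arbitrary convention with value in $[0,1]$. *)

theory Defs
  imports "HOL-Analysis.Analysis"
begin

text \<open>The index set {1..N} is a finite
  type 'n with N = CARD('n). A parameter theta = (p, rho) is a pair of vectors in
  real^'n; a sample point is a pair (x, y) of 0/1-vectors, modelled as
  functions 'n => bool (True = 1).\<close>

type_synonym 'n param = "(real^'n) \<times> (real^'n)"
type_synonym 'n sample = "('n \<Rightarrow> bool) \<times> ('n \<Rightarrow> bool)"

definition param_space :: "'n::finite param set" where
  "param_space = {(p, r). \<forall>i. 0 \<le> p$i \<and> p$i \<le> 1 \<and> 0 \<le> r$i \<and> r$i \<le> 1}"

definition Ro :: "'n::finite param set" where
  "Ro = {(p, r). r = 0}"

definition nondegenerate :: "'n::finite param set \<Rightarrow> bool" where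
  "nondegenerate \<Theta> \<longleftrightarrow>
     (\<exists>t \<in> \<Theta> \<inter> Ro. \<exists>e>0. \<forall>s \<in> Ro. dist s t < e \<longrightarrow> s \<in> \<Theta> \<inter> Ro)"

text \<open>Joint law of one pair (X_i, Y_i) with marginals Bernoulli(p) and correlation r.\<close>
definition pair_prob :: "real \<Rightarrow> real \<Rightarrow> bool \<Rightarrow> bool \<Rightarrow> real" where
  "pair_prob p r a b =
     (if a \<and> b then p^2 + r * p * (1 - p)
      else if \<not> a \<and> \<not> b then (1 - p)^2 + r * p * (1 - p)
      else (1 - r) * p * (1 - p))"

definition sample_prob :: "'n::finite param \<Rightarrow> 'n sample \<Rightarrow> real" where
  "sample_prob \<theta> z = (\<Prod>i\<in>UNIV. pair_prob (fst \<theta> $ i) (snd \<theta> $ i) (fst z i) (snd z i))"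

definition expect :: "'n::finite param \<Rightarrow> ('n sample \<Rightarrow> real) \<Rightarrow> real" where
  "expect \<theta> S = (\<Sum>z\<in>UNIV. S z * sample_prob \<theta> z)"

definition mean_p :: "'n::finite param \<Rightarrow> real" where
  "mean_p \<theta> = (\<Sum>i\<in>UNIV. fst \<theta> $ i) / real CARD('n)"

definition var_p :: "'n::finite param \<Rightarrow> real" where
  "var_p \<theta> = (\<Sum>i\<in>UNIV. (fst \<theta> $ i - mean_p \<theta>)^2) / real CARD('n)"

text \<open>Heterogeneity correlation; conv gives the (arbitrary) convention used when mu is 0 or 1.\<close>
definition rho_H :: "('n::finite param \<Rightarrow> real) \<Rightarrow> 'n param \<Rightarrow> real" where
  "rho_H conv \<theta> =
     (if 0 < mean_p \<theta> \<and> mean_p \<theta> < 1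
      then var_p \<theta> / (mean_p \<theta> * (1 - mean_p \<theta>))
      else conv \<theta>)"

end

theory Submission
  imports Defs
begin

text \<open>Move a parameter of \<open>\<Theta> \<inter> R\<^sup>o\<close> along a coordinate direction \<open>i\<close>. Near an interior
  point the moving coordinate stays strictly inside \<open>(0, 1)\<close>, hence so does \<open>\<mu>\<close>, and
  unbiasedness of \<open>S\<close> gives \<open>E(S) \<mu> (1 - \<mu>) = \<sigma>\<^sup>2\<close> on an interval of the line. Both sides
  are polynomials in the line parameter (\<open>E(S)\<close> is a finite sum of products of cell
  probabilities), so the identity holds on the whole line, far outside the parameter space.
  The line reaches \<open>\<mu> = 0\<close> and \<open>\<mu> = 1\<close>, where \<open>\<sigma>\<^sup>2 = 0\<close> forces every coordinate to equal
  \<open>\<mu>\<close>; a coordinate \<open>j \<noteq> i\<close> does not move, so it would be both 0 and 1. The convention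
  for \<open>\<rho>\<^sub>H\<close> at \<open>\<mu> \<in> {0, 1}\<close> never enters.\<close>

lemma real_polynomial_function_eq_0_if_infinite_zeros:
  fixes f :: "real \<Rightarrow> real"
  assumes "real_polynomial_function f" and "infinite {x. f x = 0}"
  shows "f x = 0"
proof -
  obtain a n where f: "f = (\<lambda>x. \<Sum>i\<le>n. a i * x ^ i)"
    using assms(1) real_polynomial_function_iff_sum by blast
  then have "\<forall>i\<le>n. a i = 0"
    using assms(2) polyfun_finite_roots by blast
  then show ?thesis
    by (simp add: f)
qed

lemma real_polynomial_function_pair_prob:
  assumes "real_polynomial_function p" and "real_polynomial_function r"
  shows "real_polynomial_function (\<lambda>x. pair_prob (p x) (r x) a b)"
  unfolding pair_prob_def
  by (cases a; cases b; simp;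
      intro real_polynomial_function.intros(2-4) real_polynomial_function_diff real_polynomial_function_power assms)

context
  fixes \<theta> :: "'a::real_normed_vector \<Rightarrow> 'n::finite param"
  assumes poly_p: "\<And>i. real_polynomial_function (\<lambda>x. fst (\<theta> x) $ i)"
begin

lemma real_polynomial_function_mean_p: "real_polynomial_function (\<lambda>x. mean_p (\<theta> x))"
  unfolding mean_p_def by (intro real_polynomial_function_divide real_polynomial_function_sum poly_p) simp

lemma real_polynomial_function_var_p: "real_polynomial_function (\<lambda>x. var_p (\<theta> x))"
  unfolding var_p_def
  by (intro real_polynomial_function_divide real_polynomial_function_sum real_polynomial_function_power
      real_polynomial_function_diff poly_p real_polynomial_function_mean_p) simp

lemma real_polynomial_function_expect:
  assumes "\<And>i. real_polynomial_function (\<lambda>x. snd (\<theta> x) $ i)"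
  shows "real_polynomial_function (\<lambda>x. expect (\<theta> x) S)"
  unfolding expect_def sample_prob_def
  by (intro real_polynomial_function_sum real_polynomial_function.intros(2,4)
      real_polynomial_function_prod real_polynomial_function_pair_prob poly_p assms) simp_all

end

lemma var_p_eq_0_iff: "var_p \<theta> = 0 \<longleftrightarrow> (\<forall>i. fst \<theta> $ i = mean_p \<theta>)"
  unfolding var_p_def by (simp add: sum_nonneg_eq_0_iff)

lemma mean_p_strict_bounds:
  fixes \<theta> :: "'n::finite param"
  assumes "\<theta> \<in> param_space" and "0 < fst \<theta> $ j" and "fst \<theta> $ j < 1"
  shows "0 < mean_p \<theta>" and "mean_p \<theta> < 1"
proof -
  obtain p r where \<theta>: "\<theta> = (p, r)" by fastforce
  have bounds: "0 \<le> p $ i" "p $ i \<le> 1" for i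
    using assms(1) by (auto simp: \<theta> param_space_def)
  have sum_split: "(\<Sum>i\<in>UNIV. p $ i) = p $ j + (\<Sum>i\<in>UNIV - {j}. p $ i)"
    by (simp add: sum.remove)
  have "0 \<le> (\<Sum>i\<in>UNIV - {j}. p $ i)"
    by (simp add: bounds sum_nonneg)
  then show "0 < mean_p \<theta>"
    using assms(2) by (simp add: \<theta> mean_p_def sum_split)
  have "(\<Sum>i\<in>UNIV - {j}. p $ i) \<le> real CARD('n) - 1"
    using sum_mono[of "UNIV - {j}" "\<lambda>i. p $ i" "\<lambda>_. 1"] by (simp add: bounds card_Diff_singleton)
  then show "mean_p \<theta> < 1"
    using assms(3) by (simp add: \<theta> mean_p_def sum_split field_simps)
qed

definition coordinate_line :: "real^'n \<Rightarrow> 'n \<Rightarrow> real \<Rightarrow> 'n::finite param" where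
  "coordinate_line p i t = (p + t *\<^sub>R axis i 1, 0)"

lemma coordinate_line_component:
  "fst (coordinate_line p i t) $ k = p $ k + (if k = i then t else 0)"
  "snd (coordinate_line p i t) $ k = 0"
  by (simp_all add: coordinate_line_def axis_def)

lemma real_polynomial_function_coordinate_line:
  "real_polynomial_function (\<lambda>t. fst (coordinate_line p i t) $ k)"
  "real_polynomial_function (\<lambda>t. snd (coordinate_line p i t) $ k)"
  unfolding coordinate_line_component
  by (cases "k = i") (simp_all add: real_polynomial_function.intros(1-3) bounded_linear_ident)

lemma mean_p_coordinate_line:
  fixes p :: "real^'n::finite"
  shows "mean_p (coordinate_line p i t) = ((\<Sum>k\<in>UNIV. p $ k) + t) / real CARD('n)"
  unfolding mean_p_def coordinate_line_component by (simp add: sum.distrib)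

lemma nondegenerate_obtains_coordinate_segment:
  fixes \<Theta> :: "'n::finite param set" and i :: 'n
  assumes "\<Theta> \<subseteq> param_space" and "nondegenerate \<Theta>"
  obtains p e where "e > 0"
    and "\<And>t. \<bar>t\<bar> < e \<Longrightarrow> coordinate_line p i t \<in> \<Theta> \<and> 0 < p $ i + t \<and> p $ i + t < 1"
proof -
  obtain \<theta>\<^sub>0 e where "\<theta>\<^sub>0 \<in> \<Theta> \<inter> Ro" "e > 0"
    and ball: "\<And>\<theta>. \<theta> \<in> Ro \<Longrightarrow> dist \<theta> \<theta>\<^sub>0 < e \<Longrightarrow> \<theta> \<in> \<Theta> \<inter> Ro"
    using assms(2) unfolding nondegenerate_def by blast
  then obtain p where \<theta>\<^sub>0: "\<theta>\<^sub>0 = (p, 0)"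
    by (auto simp: Ro_def)
  have segment: "coordinate_line p i t \<in> \<Theta>" if "\<bar>t\<bar> < e" for t
    using ball[of "coordinate_line p i t"] that
    by (simp add: coordinate_line_def \<theta>\<^sub>0 Ro_def dist_Pair_Pair dist_norm)
  have in_unit_interval: "0 \<le> p $ i + t \<and> p $ i + t \<le> 1" if "\<bar>t\<bar> < e" for t
  proof -
    have "0 \<le> fst (coordinate_line p i t) $ i \<and> fst (coordinate_line p i t) $ i \<le> 1"
      using assms(1) segment[OF that] by (force simp: param_space_def)
    then show ?thesis
      by (simp add: coordinate_line_component)
  qed
  show thesis
  proof
    show "e / 2 > 0"
      using \<open>e > 0\<close> by simp
    fix t :: real
    assume "\<bar>t\<bar> < e / 2"
    moreover have "\<bar>t - e / 2\<bar> < e" "\<bar>t + e / 2\<bar> < e"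
      using calculation \<open>e > 0\<close> by auto
    ultimately show "coordinate_line p i t \<in> \<Theta> \<and> 0 < p $ i + t \<and> p $ i + t < 1"
      using segment in_unit_interval[of "t - e / 2"] in_unit_interval[of "t + e / 2"] \<open>e > 0\<close> by auto
  qed
qed

lemma unbiased_rho_H_identity_on_coordinate_line:
  fixes \<Theta> :: "'n::finite param set" and i :: 'n
  assumes "\<Theta> \<subseteq> param_space" and "nondegenerate \<Theta>"
    and unbiased: "\<And>\<theta>. \<theta> \<in> \<Theta> \<Longrightarrow> expect \<theta> S = rho_H conv \<theta>"
  obtains p where "\<And>t. let \<theta> = coordinate_line p i t in
    expect \<theta> S * (mean_p \<theta> * (1 - mean_p \<theta>)) = var_p \<theta>"
proof -
  obtain p e where "e > 0" and segment:
    "\<And>t. \<bar>t\<bar> < e \<Longrightarrow> coordinate_line p i t \<in> \<Theta> \<and> 0 < p $ i + t \<and> p $ i + t < 1"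
    using nondegenerate_obtains_coordinate_segment[OF assms(1,2), of i] by blast
  define g where "g t = (let \<theta> = coordinate_line p i t in
    expect \<theta> S * (mean_p \<theta> * (1 - mean_p \<theta>)) - var_p \<theta>)" for t
  have poly: "real_polynomial_function g"
    unfolding g_def Let_def
    by (intro real_polynomial_function_diff real_polynomial_function.intros(2,4)
        real_polynomial_function_expect real_polynomial_function_mean_p real_polynomial_function_var_p
        real_polynomial_function_coordinate_line)
  have zeros: "{-e<..<e} \<subseteq> {t. g t = 0}"
  proof
    fix t
    assume "t \<in> {-e<..<e}"
    then have "coordinate_line p i t \<in> \<Theta>" and "0 < fst (coordinate_line p i t) $ i"
      and "fst (coordinate_line p i t) $ i < 1"
      using segment[of t] by (auto simp: coordinate_line_component)
    then have "0 < mean_p (coordinate_line p i t)" "mean_p (coordinate_line p i t) < 1"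
      using mean_p_strict_bounds assms(1) by blast+
    then show "t \<in> {t. g t = 0}"
      using unbiased[OF \<open>coordinate_line p i t \<in> \<Theta>\<close>] by (simp add: g_def rho_H_def)
  qed
  have "infinite {-e<..<e}"
    using \<open>e > 0\<close> by (simp add: infinite_Ioo)
  then have "g t = 0" for t
    using real_polynomial_function_eq_0_if_infinite_zeros[OF poly] infinite_super[OF zeros] by blast
  then show thesis
    by (intro that) (simp add: g_def Let_def)
qed

lemma coordinate_line_component_eq_boundary_mean:
  fixes p :: "real^'n::finite"
  assumes vanishes: "\<And>t. mean_p (coordinate_line p i t) \<in> {0, 1} \<Longrightarrow> var_p (coordinate_line p i t) = 0"
    and "j \<noteq> i" and "c \<in> {0, 1}"
  shows "p $ j = c"
proof -
  define t where "t = real CARD('n) * c - (\<Sum>k\<in>UNIV. p $ k)"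
  have "mean_p (coordinate_line p i t) = c"
    by (simp add: mean_p_coordinate_line t_def)
  then have "fst (coordinate_line p i t) $ j = c"
    using vanishes[of t] assms(3) var_p_eq_0_iff by metis
  then show ?thesis
    using \<open>j \<noteq> i\<close> by (simp add: coordinate_line_component)
qed

theorem theorem4:
  fixes \<Theta> :: "'n::finite param set"
    and conv :: "'n param \<Rightarrow> real"
  assumes "CARD('n) > 1"
    and "\<Theta> \<subseteq> param_space"
    and "nondegenerate \<Theta>"
    and "\<forall>\<theta>\<in>\<Theta>. 0 \<le> conv \<theta> \<and> conv \<theta> \<le> 1"
  shows "\<not> (\<exists>S :: 'n sample \<Rightarrow> real. \<forall>\<theta>\<in>\<Theta>. expect \<theta> S = rho_H conv \<theta>)"
proof
  assume "\<exists>S :: 'n sample \<Rightarrow> real. \<forall>\<theta>\<in>\<Theta>. expect \<theta> S = rho_H conv \<theta>"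
  then obtain S :: "'n sample \<Rightarrow> real" where unbiased: "\<And>\<theta>. \<theta> \<in> \<Theta> \<Longrightarrow> expect \<theta> S = rho_H conv \<theta>"
    by blast
  obtain i j :: 'n where "j \<noteq> i"
    using assms(1) card_le_Suc0_iff_eq[of "UNIV :: 'n set"] by force
  obtain p where identity: "\<And>t. let \<theta> = coordinate_line p i t in
      expect \<theta> S * (mean_p \<theta> * (1 - mean_p \<theta>)) = var_p \<theta>"
    using unbiased_rho_H_identity_on_coordinate_line[OF assms(2,3) unbiased, of i] by blast
  have "var_p (coordinate_line p i t) = 0" if "mean_p (coordinate_line p i t) \<in> {0, 1}" for t
    using identity[of t] that by (auto simp: Let_def)
  then have "p $ j = 0" and "p $ j = 1"
    using coordinate_line_component_eq_boundary_mean \<open>j \<noteq> i\<close> by blast+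
  then show False
    by simp
qed

end
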